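(* Let $\mathfrak{g}$ be a Lie algebra over a field $\mathbb{K}$ and let $\mathfrak{q},\mathfrak{w}$ be Lie subalgebras of $\mathfrak{g}$. Then $$\mathfrak{q}_{\{\mathfrak{w}\}}:=\{Z\in\mathfrak{q}+\mathfrak{w}\mid \mathrm{ad}(\mathfrak{q})^{h}(Z)\subseteq\mathfrak{q}+\mathfrak{w}\ \text{for all } h\ge 0\}$$ is the largest Lie subalgebra $\mathfrak{q}'$ of $\mathfrak{g}$ with $\mathfrak{q}\subseteq\mathfrak{q}'\subseteq\mathfrak{q}+\mathfrak{w}$. In particular, if $\mathfrak{g}$ is a complex Lie algebra, $\sigma$ an anti-$\mathbb{C}$-linear involution of $\mathfrak{g}$ and $\mathfrak{q}$ a complex Lie subalgebra, then $\mathfrak{q}_{\{\sigma(\mathfrak{q})\}}$ is the maximal complex Lie subalgebra $\mathfrak{q}'$ of $\mathfrak{g}$ with $\mathfrak{q}\subseteq\mathfrak{q}'\subseteq\mathfrak{q}+\sigma(\mathfrak{q})$.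
   Context: Here $\mathrm{ad}(\mathfrak{q})^{h}(Z)$ denotes the set of all iterated brackets $[Y_h,[\dots,[Y_1,Z]\dots]]$ with $Y_1,\dots,Y_h\in\mathfrak{q}$ (for $h=0$ it is $\{Z\}$). *)

theory Defs
  imports Complex_Main
begin

locale lie_algebra = vector_space scale
  for scale :: "'k::field \<Rightarrow> 'a::ab_group_add \<Rightarrow> 'a" +
  fixes br :: "'a \<Rightarrow> 'a \<Rightarrow> 'a"
  assumes br_add_left: "br (x + y) z = br x z + br y z"
    and br_add_right: "br x (y + z) = br x y + br x z"
    and br_scale_left: "br (scale c x) y = scale c (br x y)"
    and br_scale_right: "br x (scale c y) = scale c (br x y)"
    and br_alt: "br x x = 0"
    and jacobi: "br x (br y z) + br y (br z x) + br z (br x y) = 0"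

definition lie_subalgebra ::
  "('k::field \<Rightarrow> 'a::ab_group_add \<Rightarrow> 'a) \<Rightarrow> ('a \<Rightarrow> 'a \<Rightarrow> 'a) \<Rightarrow> 'a set \<Rightarrow> bool" where
  "lie_subalgebra scale br S \<longleftrightarrow> module.subspace scale S \<and> (\<forall>x\<in>S. \<forall>y\<in>S. br x y \<in> S)"

definition set_sum :: "'a::plus set \<Rightarrow> 'a set \<Rightarrow> 'a set" where
  "set_sum Q W = {x + y | x y. x \<in> Q \<and> y \<in> W}"

fun ad_iter :: "('a \<Rightarrow> 'a \<Rightarrow> 'a) \<Rightarrow> 'a set \<Rightarrow> nat \<Rightarrow> 'a \<Rightarrow> 'a set" where
  "ad_iter br Q 0 Z = {Z}"
| "ad_iter br Q (Suc h) Z = {br Y X | Y X. Y \<in> Q \<and> X \<in> ad_iter br Q h Z}"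

definition q_brace :: "('a::plus \<Rightarrow> 'a \<Rightarrow> 'a) \<Rightarrow> 'a set \<Rightarrow> 'a set \<Rightarrow> 'a set" where
  "q_brace br Q W = {Z \<in> set_sum Q W. \<forall>h. ad_iter br Q h Z \<subseteq> set_sum Q W}"

end

theory Submission
  imports Defs
begin

text \<open>Write \<open>S = q + w\<close>. Then \<open>q_{w}\<close> is the largest \<open>ad(q)\<close>-invariant subset of \<open>S\<close>; it is a
  subspace because \<open>ad(q)\<^sup>h\<close> is linear, and it contains every Lie subalgebra between \<open>q\<close> and
  \<open>S\<close>, since such a subalgebra is \<open>ad(q)\<close>-invariant. For closure under the bracket, first
  \<open>[u, v] \<in> S\<close> for \<open>u, v \<in> q_{w}\<close>: splitting \<open>u = a + b\<close> and \<open>v = c + d\<close> along \<open>q + w\<close>, the terms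
  \<open>[a, v]\<close> and \<open>[b, c] = -[c, b]\<close> lie in \<open>q_{w}\<close> and \<open>[b, d] \<in> w\<close>. Since \<open>ad Y\<close> is a derivation,
  \<open>ad(q)\<^sup>h [u, v]\<close> is a sum of brackets of elements of \<open>q_{w}\<close>, hence lies in \<open>S\<close> as well.
  The complex statement is the special case \<open>w = \<sigma>(q)\<close>, which is a complex Lie subalgebra
  because \<open>\<sigma>\<close> is additive, conjugate-linear and preserves brackets.\<close>

lemma set_sum_subset_left: "0 \<in> B \<Longrightarrow> A \<subseteq> set_sum A (B :: 'a::monoid_add set)"
  unfolding set_sum_def by force

lemma set_sum_subset_right: "0 \<in> A \<Longrightarrow> B \<subseteq> set_sum A (B :: 'a::monoid_add set)"
  unfolding set_sum_def by force

definition ad_core :: "('a \<Rightarrow> 'a \<Rightarrow> 'a) \<Rightarrow> 'a set \<Rightarrow> 'a set \<Rightarrow> 'a set" where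
  "ad_core br Q S = {Z. \<forall>h. ad_iter br Q h Z \<subseteq> S}"

lemma mem_ad_core_iff: "Z \<in> ad_core br Q S \<longleftrightarrow> (\<forall>h. ad_iter br Q h Z \<subseteq> S)"
  by (simp add: ad_core_def)

lemma ad_core_subset: "ad_core br Q S \<subseteq> S"
proof
  fix Z assume "Z \<in> ad_core br Q S"
  then have "ad_iter br Q 0 Z \<subseteq> S"
    unfolding mem_ad_core_iff by (rule spec)
  then show "Z \<in> S"
    by simp
qed

lemma q_brace_eq_ad_core: "q_brace br Q W = ad_core br Q (set_sum Q W)"
proof -
  have "q_brace br Q W = set_sum Q W \<inter> ad_core br Q (set_sum Q W)"
    by (auto simp: q_brace_def ad_core_def)
  then show ?thesis
    by (simp add: Int_absorb1 ad_core_subset)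
qed

lemma ad_iter_Suc_inner: "ad_iter br Q (Suc h) Z = (\<Union>Y\<in>Q. ad_iter br Q h (br Y Z))"
proof (induction h arbitrary: Z)
  case (Suc h)
  have "ad_iter br Q (Suc (Suc h)) Z = {br Y X | Y X. Y \<in> Q \<and> X \<in> (\<Union>Y'\<in>Q. ad_iter br Q h (br Y' Z))}"
    by (subst ad_iter.simps(2)) (simp only: Suc.IH)
  also have "\<dots> = (\<Union>Y'\<in>Q. ad_iter br Q (Suc h) (br Y' Z))"
    by auto
  finally show ?case .
qed auto

lemma br_mem_ad_core:
  assumes "Y \<in> Q" and "Z \<in> ad_core br Q S"
  shows "br Y Z \<in> ad_core br Q S"
proof -
  have "ad_iter br Q h (br Y Z) \<subseteq> ad_iter br Q (Suc h) Z" for h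
    unfolding ad_iter_Suc_inner using assms(1) by blast
  then show ?thesis
    using assms(2) unfolding mem_ad_core_iff by blast
qed

lemma ad_iter_subset:
  assumes "Z \<in> T" and "\<forall>Y\<in>Q. \<forall>X\<in>T. br Y X \<in> T"
  shows "ad_iter br Q h Z \<subseteq> T"
  using assms by (induction h) auto

lemma subset_ad_core:
  assumes "T \<subseteq> S" and "\<forall>Y\<in>Q. \<forall>X\<in>T. br Y X \<in> T"
  shows "T \<subseteq> ad_core br Q S"
proof
  fix Z assume "Z \<in> T"
  then have "ad_iter br Q h Z \<subseteq> S" for h
    using ad_iter_subset[OF _ assms(2)] assms(1) by blast
  then show "Z \<in> ad_core br Q S"
    by (simp add: mem_ad_core_iff)
qed

context lie_algebra
begin

lemma br_zero_right: "br x 0 = 0"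
  using br_add_right[of x 0 0] by simp

lemma br_anticomm: "br x y = - br y x"
proof -
  have "br x x + br x y + (br y x + br y y) = 0"
    using br_alt[of "x + y"] by (simp add: br_add_left br_add_right algebra_simps)
  then show ?thesis by (simp add: br_alt eq_neg_iff_add_eq_0)
qed

lemma ad_derivation: "br z (br x y) = br (br z x) y + br x (br z y)"
proof -
  have "br x (br y z) = - br x (br z y)"
    using br_anticomm[of y z] br_scale_right[of x "-1" "br z y"] by simp
  moreover have "br y (br z x) = - br (br z x) y"
    by (rule br_anticomm)
  ultimately show ?thesis
    using jacobi[of x y z] by (simp add: algebra_simps flip: eq_diff_eq)
qed

lemma ad_iter_add:
  "ad_iter br Q h (Z\<^sub>1 + Z\<^sub>2) \<subseteq> set_sum (ad_iter br Q h Z\<^sub>1) (ad_iter br Q h Z\<^sub>2)"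
proof (induction h)
  case (Suc h)
  show ?case
  proof
    fix x assume "x \<in> ad_iter br Q (Suc h) (Z\<^sub>1 + Z\<^sub>2)"
    then obtain Y x\<^sub>1 x\<^sub>2 where "Y \<in> Q" "x = br Y (x\<^sub>1 + x\<^sub>2)"
      and "x\<^sub>1 \<in> ad_iter br Q h Z\<^sub>1" "x\<^sub>2 \<in> ad_iter br Q h Z\<^sub>2"
      using Suc.IH by (auto simp: set_sum_def)
    then show "x \<in> set_sum (ad_iter br Q (Suc h) Z\<^sub>1) (ad_iter br Q (Suc h) Z\<^sub>2)"
      by (auto simp: set_sum_def br_add_right)
  qed
qed (simp add: set_sum_def)

lemma ad_iter_scale: "ad_iter br Q h (scale c Z) \<subseteq> scale c ` ad_iter br Q h Z"
proof (induction h)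
  case (Suc h)
  show ?case
  proof
    fix x assume "x \<in> ad_iter br Q (Suc h) (scale c Z)"
    then obtain Y X where "Y \<in> Q" "X \<in> ad_iter br Q h Z" "x = br Y (scale c X)"
      using Suc.IH by auto
    then show "x \<in> scale c ` ad_iter br Q (Suc h) Z"
      by (auto simp: br_scale_right)
  qed
qed simp

lemma set_sum_subset_subspace:
  assumes "subspace S" "A \<subseteq> S" "B \<subseteq> S"
  shows "set_sum A B \<subseteq> S"
  using subspace_add[OF assms(1)] assms(2,3) by (auto simp: set_sum_def)

lemma subspace_ad_core:
  assumes "subspace S"
  shows "subspace (ad_core br Q S)"
proof (rule subspaceI)
  show "0 \<in> ad_core br Q S"
    using subset_ad_core[of "{0}" S Q] subspace_0[OF assms] by (auto simp: br_zero_right)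
next
  fix x y assume "x \<in> ad_core br Q S" "y \<in> ad_core br Q S"
  then have "set_sum (ad_iter br Q h x) (ad_iter br Q h y) \<subseteq> S" for h
    using set_sum_subset_subspace[OF assms] by (simp add: mem_ad_core_iff)
  then show "x + y \<in> ad_core br Q S"
    using ad_iter_add unfolding mem_ad_core_iff by (meson order_trans)
next
  fix c x assume "x \<in> ad_core br Q S"
  then have "scale c ` ad_iter br Q h x \<subseteq> S" for h
    using subspace_scale[OF assms] by (auto simp: mem_ad_core_iff)
  then show "scale c x \<in> ad_core br Q S"
    using ad_iter_scale unfolding mem_ad_core_iff by (meson order_trans)
qed

lemma br_mem_ad_core_of_invariant:
  assumes "subspace S" and T_inv: "\<forall>Y\<in>Q. \<forall>X\<in>T. br Y X \<in> T"
    and br_T: "\<forall>u\<in>T. \<forall>v\<in>T. br u v \<in> S" and "u \<in> T" "v \<in> T"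
  shows "br u v \<in> ad_core br Q S"
  unfolding mem_ad_core_iff
proof
  fix h show "ad_iter br Q h (br u v) \<subseteq> S"
    using \<open>u \<in> T\<close> \<open>v \<in> T\<close>
  proof (induction h arbitrary: u v)
    case 0
    then show ?case using br_T by simp
  next
    case (Suc h)
    have "ad_iter br Q h (br Y (br u v)) \<subseteq> S" if "Y \<in> Q" for Y
    proof -
      have "br Y u \<in> T" "br Y v \<in> T"
        using T_inv Suc.prems \<open>Y \<in> Q\<close> by auto
      then have "ad_iter br Q h (br (br Y u) v) \<subseteq> S" "ad_iter br Q h (br u (br Y v)) \<subseteq> S"
        using Suc.IH Suc.prems by auto
      then have "set_sum (ad_iter br Q h (br (br Y u) v)) (ad_iter br Q h (br u (br Y v))) \<subseteq> S"
        by (rule set_sum_subset_subspace[OF \<open>subspace S\<close>])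
      then show ?thesis
        using ad_iter_add[of Q h "br (br Y u) v" "br u (br Y v)"]
        unfolding ad_derivation[of Y u v, symmetric] by (rule order_trans[rotated])
    qed
    then show ?case
      unfolding ad_iter_Suc_inner UN_subset_iff by blast
  qed
qed

context
  fixes q w :: "'a set"
  assumes q_sub: "lie_subalgebra scale br q" and w_sub: "lie_subalgebra scale br w"
begin

lemma subspace_set_sum_q_w: "subspace (set_sum q w)"
  using q_sub w_sub subspace_sums unfolding lie_subalgebra_def set_sum_def by blast

lemma q_brace_greatest:
  assumes "lie_subalgebra scale br q'" "q \<subseteq> q'" "q' \<subseteq> set_sum q w"
  shows "q' \<subseteq> q_brace br q w"
  using assms subset_ad_core[of q' "set_sum q w" q]
  unfolding q_brace_eq_ad_core lie_subalgebra_def by blast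

lemma q_subset_q_brace: "q \<subseteq> q_brace br q w"
proof -
  have "0 \<in> w"
    using w_sub by (simp add: lie_subalgebra_def subspace_0)
  then show ?thesis
    by (rule q_brace_greatest[OF q_sub order_refl set_sum_subset_left])
qed

lemma q_brace_subset_set_sum: "q_brace br q w \<subseteq> set_sum q w"
  unfolding q_brace_eq_ad_core by (rule ad_core_subset)

lemma br_mem_q_brace: "Y \<in> q \<Longrightarrow> Z \<in> q_brace br q w \<Longrightarrow> br Y Z \<in> q_brace br q w"
  unfolding q_brace_eq_ad_core by (rule br_mem_ad_core)

lemma subspace_q_brace: "subspace (q_brace br q w)"
  unfolding q_brace_eq_ad_core by (rule subspace_ad_core[OF subspace_set_sum_q_w])

lemma br_q_brace_mem_set_sum:
  assumes u: "u \<in> q_brace br q w" and v: "v \<in> q_brace br q w"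
  shows "br u v \<in> set_sum q w"
proof -
  obtain a b where ab: "u = a + b" "a \<in> q" "b \<in> w"
    using u q_brace_subset_set_sum unfolding set_sum_def by blast
  obtain c d where cd: "v = c + d" "c \<in> q" "d \<in> w"
    using v q_brace_subset_set_sum unfolding set_sum_def by blast
  have "b = u - a"
    using ab(1) by simp
  then have "b \<in> q_brace br q w"
    using subspace_diff[OF subspace_q_brace u] q_subset_q_brace ab(2) by blast
  then have "- br c b \<in> q_brace br q w"
    using subspace_neg[OF subspace_q_brace] br_mem_q_brace[OF cd(2)] by blast
  then have "br b c \<in> set_sum q w"
    unfolding br_anticomm[of b c] using q_brace_subset_set_sum by blast
  moreover have "br a v \<in> set_sum q w"
    using q_brace_subset_set_sum br_mem_q_brace[OF ab(2) v] by blast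
  moreover have "br b d \<in> set_sum q w"
  proof -
    have "0 \<in> q"
      using q_sub by (simp add: lie_subalgebra_def subspace_0)
    moreover have "br b d \<in> w"
      using w_sub ab(3) cd(3) by (simp add: lie_subalgebra_def)
    ultimately show ?thesis
      using set_sum_subset_right by blast
  qed
  moreover have "br u v = br a v + (br b c + br b d)"
    unfolding ab(1) cd(1) br_add_left br_add_right by (simp only: ac_simps)
  ultimately show ?thesis
    by (simp add: subspace_add[OF subspace_set_sum_q_w])
qed

lemma lie_subalgebra_q_brace: "lie_subalgebra scale br (q_brace br q w)"
  unfolding lie_subalgebra_def
proof (intro conjI ballI)
  show "subspace (q_brace br q w)"
    by (rule subspace_q_brace)
  fix u v assume u: "u \<in> q_brace br q w" and v: "v \<in> q_brace br q w"
  have "br u v \<in> ad_core br q (set_sum q w)"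
    by (rule br_mem_ad_core_of_invariant[OF subspace_set_sum_q_w _ _ u v])
      (simp_all add: br_mem_q_brace br_q_brace_mem_set_sum)
  then show "br u v \<in> q_brace br q w"
    by (simp only: q_brace_eq_ad_core)
qed

lemma q_brace_is_greatest_lie_subalgebra:
  "lie_subalgebra scale br (q_brace br q w)
    \<and> q \<subseteq> q_brace br q w \<and> q_brace br q w \<subseteq> set_sum q w
    \<and> (\<forall>q'. lie_subalgebra scale br q' \<and> q \<subseteq> q' \<and> q' \<subseteq> set_sum q w \<longrightarrow> q' \<subseteq> q_brace br q w)"
  by (intro conjI allI impI lie_subalgebra_q_brace q_subset_q_brace q_brace_subset_set_sum;
      elim conjE; rule q_brace_greatest)

end

end

lemma lie_subalgebra_semilinear_image:
  assumes "lie_algebra scale br" and sub: "lie_subalgebra scale br Q"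
    and add: "\<And>x y. \<sigma> (x + y) = \<sigma> x + \<sigma> y"
    and semilinear: "\<And>c x. \<sigma> (scale c x) = scale (\<phi> c) (\<sigma> x)" and "surj \<phi>"
    and bracket: "\<And>x y. \<sigma> (br x y) = br (\<sigma> x) (\<sigma> y)"
  shows "lie_subalgebra scale br (\<sigma> ` Q)"
proof -
  interpret lie_algebra scale br by fact
  have Q: "subspace Q" "\<And>x y. x \<in> Q \<Longrightarrow> y \<in> Q \<Longrightarrow> br x y \<in> Q"
    using sub by (auto simp: lie_subalgebra_def)
  have "subspace (\<sigma> ` Q)"
  proof (rule subspaceI)
    show "0 \<in> \<sigma> ` Q"
      using add[of 0 0] subspace_0[OF Q(1)] by (metis add_cancel_right_right image_eqI)
  next
    fix x y assume "x \<in> \<sigma> ` Q" "y \<in> \<sigma> ` Q"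
    then show "x + y \<in> \<sigma> ` Q"
      using add subspace_add[OF Q(1)] by (auto simp flip: add)
  next
    fix c x assume "x \<in> \<sigma> ` Q"
    moreover obtain c' where "c = \<phi> c'"
      using \<open>surj \<phi>\<close> by (metis surjD)
    ultimately show "scale c x \<in> \<sigma> ` Q"
      using subspace_scale[OF Q(1)] by (auto simp flip: semilinear)
  qed
  moreover have "br x y \<in> \<sigma> ` Q" if "x \<in> \<sigma> ` Q" "y \<in> \<sigma> ` Q" for x y
    using that Q(2) by (auto simp flip: bracket)
  ultimately show ?thesis
    by (simp add: lie_subalgebra_def)
qed

theorem lemma3p5:
  fixes scale :: "'k::field \<Rightarrow> 'a::ab_group_add \<Rightarrow> 'a"
    and br :: "'a \<Rightarrow> 'a \<Rightarrow> 'a"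
    and q w :: "'a set"
    and cscale :: "complex \<Rightarrow> 'b::ab_group_add \<Rightarrow> 'b"
    and cbr :: "'b \<Rightarrow> 'b \<Rightarrow> 'b"
    and \<sigma> :: "'b \<Rightarrow> 'b"
    and cq :: "'b set"
  assumes lie: "lie_algebra scale br"
    and q_sub: "lie_subalgebra scale br q"
    and w_sub: "lie_subalgebra scale br w"
    and clie: "lie_algebra cscale cbr"
    and sigma_add: "\<And>x y. \<sigma> (x + y) = \<sigma> x + \<sigma> y"
    and sigma_antilinear: "\<And>c x. \<sigma> (cscale c x) = cscale (cnj c) (\<sigma> x)"
    and sigma_bracket: "\<And>x y. \<sigma> (cbr x y) = cbr (\<sigma> x) (\<sigma> y)"
    and sigma_involution: "\<And>x. \<sigma> (\<sigma> x) = x"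
    and cq_sub: "lie_subalgebra cscale cbr cq"
  shows "(lie_subalgebra scale br (q_brace br q w)
          \<and> q \<subseteq> q_brace br q w \<and> q_brace br q w \<subseteq> set_sum q w
          \<and> (\<forall>q'. lie_subalgebra scale br q' \<and> q \<subseteq> q' \<and> q' \<subseteq> set_sum q w
                  \<longrightarrow> q' \<subseteq> q_brace br q w))
       \<and> (lie_subalgebra cscale cbr (q_brace cbr cq (\<sigma> ` cq))
          \<and> cq \<subseteq> q_brace cbr cq (\<sigma> ` cq) \<and> q_brace cbr cq (\<sigma> ` cq) \<subseteq> set_sum cq (\<sigma> ` cq)
          \<and> (\<forall>q'. lie_subalgebra cscale cbr q' \<and> cq \<subseteq> q' \<and> q' \<subseteq> set_sum cq (\<sigma> ` cq)
                  \<longrightarrow> q' \<subseteq> q_brace cbr cq (\<sigma> ` cq)))"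
proof -
  have "surj cnj"
    by (rule surjI[where f = cnj]) (rule complex_cnj_cnj)
  note sigma_cq_sub = lie_subalgebra_semilinear_image[of cscale cbr cq \<sigma> cnj,
      OF clie cq_sub sigma_add sigma_antilinear this sigma_bracket]
  show ?thesis
    using lie_algebra.q_brace_is_greatest_lie_subalgebra[OF lie q_sub w_sub]
      lie_algebra.q_brace_is_greatest_lie_subalgebra[OF clie cq_sub sigma_cq_sub]
    by (rule conjI)
qed

end
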